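(* Let $G=(V,E)$ be a connected graph which is either finite or infinite with bounded degrees, let $n=|V|\in\mathbb N\cup\{\infty\}$, let $o\in V$ and let $(m_t)_{t\ge0}$ be the fragmentation process originating at $o$. Let $t>0$ and suppose that $Q_t\ge 2/n$ (this holds automatically if $V$ is infinite, interpreting $2/n=0$). Then $\mathcal{E}_t\ge Q_t^3/8$.
   Context: Fragmentation process originating at $o$: $m_t:V\to[0,1]$, with $m_0(o)=1$ and $m_0(v)=0$ for $v\neq o$. Each edge carries an independent rate-one Poisson clock; when the clock of edge $\{u,v\}$ rings at time $t$, set $m_t(u)=m_t(v)=\frac{m_{t-}(u)+m_{t-}(v)}{2}$ (with $m_{t-}(u)=\lim_{s\uparrow t}m_s(u)$), other values unchanged. Define $Q_t:=\sum_{v\in V}m_t(v)^2$ and $\mathcal E_t:=\sum_{\{u,v\}\in E}(m_t(u)-m_t(v))^2$. *)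

theory Defs
  imports "HOL-Analysis.Analysis"
begin

text \<open>Graphs: vertex set is the whole type 'a, adjacency a symmetric irreflexive relation.\<close>

definition simple_graph :: "('a \<Rightarrow> 'a \<Rightarrow> bool) \<Rightarrow> bool" where
  "simple_graph adj \<longleftrightarrow> (\<forall>u v. adj u v \<longrightarrow> adj v u) \<and> (\<forall>v. \<not> adj v v)"

definition connected_graph :: "('a \<Rightarrow> 'a \<Rightarrow> bool) \<Rightarrow> bool" where
  "connected_graph adj \<longleftrightarrow> (\<forall>u v. adj\<^sup>*\<^sup>* u v)"

definition bounded_degree :: "('a \<Rightarrow> 'a \<Rightarrow> bool) \<Rightarrow> bool" where
  "bounded_degree adj \<longleftrightarrow> (\<exists>D::nat. \<forall>v. finite {u. adj v u} \<and> card {u. adj v u} \<le> D)"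

definition frag_step :: "('a \<Rightarrow> real) \<Rightarrow> 'a \<times> 'a \<Rightarrow> ('a \<Rightarrow> real)" where
  "frag_step m e = (case e of (u, v) \<Rightarrow>
      m(u := (m u + m v) / 2, v := (m u + m v) / 2))"

text \<open>Configuration of the fragmentation process started at r after the sequence of
  clock rings es (listed in chronological order).\<close>
definition frag_config :: "'a \<Rightarrow> ('a \<times> 'a) list \<Rightarrow> ('a \<Rightarrow> real)" where
  "frag_config r es = foldl frag_step (\<lambda>v. if v = r then 1 else 0) es"

definition Qsum :: "('a \<Rightarrow> real) \<Rightarrow> real" where
  "Qsum m = (\<Sum>\<^sub>\<infinity> v. (m v)\<^sup>2)"

text \<open>Sum over unordered edges = half the sum over ordered adjacent pairs.\<close>
definition Esum :: "('a \<Rightarrow> 'a \<Rightarrow> bool) \<Rightarrow> ('a \<Rightarrow> real) \<Rightarrow> real" where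
  "Esum adj m = (\<Sum>\<^sub>\<infinity> (u, v) \<in> {(u, v). adj u v}. (m u - m v)\<^sup>2) / 2"

end

theory Submission
  imports Defs "HOL-Library.Transitive_Closure_Table"
begin

(* The configuration m is a finitely supported probability vector; let M be its maximum, so that
   Q = sum m^2 <= M * sum m = M.  The set H = {v. m v > M/2} carries mass more than |H| M/2, hence
   |H| < 2/M, and Q >= 2/n leaves a vertex outside H.  A path without repeated vertices from a
   maximiser of m out of H has at most |H| edges and m drops by at least M/2 along it, so by
   Cauchy-Schwarz these edges alone contribute at least (M/2)^2 / |H| >= M^3/8 to the energy.
   Only the fact that m stays a probability vector enters. *)

definition prob_vector_on :: "'a set \<Rightarrow> ('a \<Rightarrow> real) \<Rightarrow> bool" where
  "prob_vector_on S m \<longleftrightarrow> finite S \<and> (\<forall>v. v \<notin> S \<longrightarrow> m v = 0) \<and> (\<forall>v. 0 \<le> m v) \<and> sum m S = 1"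

lemma sum_frag_step:
  assumes "finite S" "u \<in> S" "v \<in> S"
  shows "sum (frag_step m (u, v)) S = sum m S"
proof -
  have decompose: "sum f S = sum f (S - {u, v}) + sum f {u, v}" for f :: "'a \<Rightarrow> real"
    using assms by (intro sum.subset_diff) auto
  have "sum (frag_step m (u, v)) (S - {u, v}) = sum m (S - {u, v})"
    by (intro sum.cong) (auto simp: frag_step_def)
  moreover have "sum (frag_step m (u, v)) {u, v} = sum m {u, v}"
    by (cases "u = v") (simp_all add: frag_step_def)
  ultimately show ?thesis
    by (simp add: decompose)
qed

lemma prob_vector_on_frag_step:
  assumes "prob_vector_on S m"
  shows "prob_vector_on (S \<union> {u, v}) (frag_step m (u, v))"
proof -
  have "sum m (S \<union> {u, v}) = sum m S"
    using assms by (intro sum.mono_neutral_right) (auto simp: prob_vector_on_def)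
  moreover have "sum (frag_step m (u, v)) (S \<union> {u, v}) = sum m (S \<union> {u, v})"
    using assms by (intro sum_frag_step) (auto simp: prob_vector_on_def)
  ultimately show ?thesis
    using assms by (auto simp: prob_vector_on_def frag_step_def)
qed

lemma prob_vector_frag_config: "\<exists>S. prob_vector_on S (frag_config r es)"
proof (induction es rule: rev_induct)
  case Nil
  have "prob_vector_on {r} (frag_config r [])"
    by (simp add: prob_vector_on_def frag_config_def)
  then show ?case ..
next
  case (snoc e es)
  obtain S where S: "prob_vector_on S (frag_config r es)"
    using snoc.IH ..
  obtain u v where e: "e = (u, v)"
    by (cases e)
  have "prob_vector_on (S \<union> {u, v}) (frag_config r (es @ [e]))"
    using prob_vector_on_frag_step[OF S, of u v] by (simp add: frag_config_def e)
  then show ?case ..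
qed

lemma prob_vector_on_has_max:
  assumes "prob_vector_on S m"
  obtains v where "\<forall>u. m u \<le> m v"
proof -
  from assms have "finite S" "S \<noteq> {}"
    by (auto simp: prob_vector_on_def)
  then have "Max (m ` S) \<in> m ` S"
    by (intro Max_in) auto
  then obtain v where v: "v \<in> S" "m v = Max (m ` S)"
    by (metis imageE)
  have "m u \<le> m v" for u
  proof (cases "u \<in> S")
    case True
    then show ?thesis
      using v \<open>finite S\<close> by simp
  next
    case False
    then show ?thesis
      using assms by (simp add: prob_vector_on_def)
  qed
  then show ?thesis
    using that by blast
qed

lemma prob_vector_on_max_pos:
  assumes "prob_vector_on S m" "\<forall>u. m u \<le> M"
  shows "0 < M"
proof -
  have "1 \<le> (\<Sum>v\<in>S. M)"
    using assms by (metis prob_vector_on_def sum_mono)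
  moreover have "0 \<le> M"
    using assms by (meson order.trans prob_vector_on_def)
  ultimately show ?thesis
    by (cases "M = 0") auto
qed

lemma Qsum_eq_sum:
  assumes "finite S" "\<forall>v. v \<notin> S \<longrightarrow> m v = 0"
  shows "Qsum m = (\<Sum>v\<in>S. (m v)\<^sup>2)"
proof -
  have "Qsum m = infsum (\<lambda>v. (m v)\<^sup>2) S"
    unfolding Qsum_def using assms by (intro infsum_cong_neutral) auto
  then show ?thesis
    using assms by simp
qed

lemma Qsum_le_max:
  assumes "prob_vector_on S m" "\<forall>u. m u \<le> M"
  shows "Qsum m \<le> M"
proof -
  have "Qsum m = (\<Sum>v\<in>S. (m v)\<^sup>2)"
    using assms by (intro Qsum_eq_sum) (auto simp: prob_vector_on_def)
  also have "\<dots> \<le> (\<Sum>v\<in>S. M * m v)"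
    using assms by (intro sum_mono) (auto simp: prob_vector_on_def power2_eq_square mult_right_mono)
  also have "\<dots> = M"
    using assms by (simp add: prob_vector_on_def flip: sum_distrib_left)
  finally show ?thesis .
qed

lemma finite_superlevel:
  assumes "prob_vector_on S m" "0 \<le> c"
  shows "finite {u. c < m u}"
proof (rule finite_subset)
  show "{u. c < m u} \<subseteq> S"
    using assms by (force simp: prob_vector_on_def)
qed (use assms in \<open>simp add: prob_vector_on_def\<close>)

lemma card_superlevel_lt:
  assumes "prob_vector_on S m" "0 \<le> c" "c < m v"
  shows "real (card {u. c < m u}) * c < 1"
proof -
  have "real (card {u. c < m u}) * c = (\<Sum>u | c < m u. c)"
    by simp
  also have "\<dots> < (\<Sum>u | c < m u. m u)"
    using finite_superlevel[OF assms(1,2)] assms(3) by (intro sum_strict_mono_ex1) auto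
  also have "\<dots> \<le> sum m S"
    using assms by (intro sum_mono2) (force simp: prob_vector_on_def)+
  finally show ?thesis
    using assms by (simp add: prob_vector_on_def)
qed

lemma exists_vertex_below_half_max:
  assumes "prob_vector_on S m" "\<forall>u. m u \<le> M"
    and "finite (UNIV :: 'a set) \<longrightarrow> 2 / real (card (UNIV :: 'a set)) \<le> Qsum m"
  shows "\<exists>w :: 'a. m w \<le> M / 2"
proof (rule ccontr)
  assume "\<nexists>w. m w \<le> M / 2"
  then have high: "M / 2 < m u" for u
    by (simp add: not_le)
  then have superlevel_UNIV: "{u. M / 2 < m u} = UNIV"
    by auto
  have "0 \<le> M / 2"
    using prob_vector_on_max_pos[OF assms(1,2)] by simp
  have "finite (UNIV :: 'a set)"
    using finite_superlevel[OF assms(1) \<open>0 \<le> M / 2\<close>] by (simp only: superlevel_UNIV)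
  moreover have "real (card (UNIV :: 'a set)) * (M / 2) < 1"
    using card_superlevel_lt[OF assms(1) \<open>0 \<le> M / 2\<close> high] by (simp only: superlevel_UNIV)
  moreover have "2 / real (card (UNIV :: 'a set)) \<le> M"
    using assms \<open>finite UNIV\<close> Qsum_le_max by fastforce
  ultimately show False
    by (simp add: divide_le_eq finite_UNIV_card_ge_0 mult.commute)
qed

lemma rtranclp_exit:
  assumes "r\<^sup>*\<^sup>* x y" "y \<notin> H"
  obtains z where "z \<notin> H" "(\<lambda>u v. r u v \<and> u \<in> H)\<^sup>*\<^sup>* x z"
proof -
  let ?r_H = "\<lambda>u v. r u v \<and> u \<in> H"
  from assms(1) have "?r_H\<^sup>*\<^sup>* x y \<or> (\<exists>z. z \<notin> H \<and> ?r_H\<^sup>*\<^sup>* x z)"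
  proof (induction rule: rtranclp_induct)
    case base
    then show ?case by simp
  next
    case (step y z)
    then show ?case
      by (cases "y \<in> H") (auto intro: rtranclp.rtrancl_into_rtrancl)
  qed
  then show ?thesis
    using assms(2) that by blast
qed

lemma rtrancl_path_last: "rtrancl_path r x xs y \<Longrightarrow> last (x # xs) = y"
  by (induction rule: rtrancl_path.induct) auto

lemma rtrancl_path_zip: "rtrancl_path r x xs y \<Longrightarrow> (u, v) \<in> set (zip (x # xs) xs) \<Longrightarrow> r u v"
  by (induction rule: rtrancl_path.induct) auto

lemma zip_tl_not_reversed:
  "distinct zs \<Longrightarrow> (u, v) \<in> set (zip zs (tl zs)) \<Longrightarrow> (v, u) \<notin> set (zip zs (tl zs))"
  by (induction zs rule: induct_list012) (auto dest: set_zip_leftD set_zip_rightD)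

lemma rtranclp_exit_path:
  assumes "r\<^sup>*\<^sup>* x y" "y \<notin> H"
  obtains xs where "distinct (x # xs)" "last (x # xs) \<notin> H"
    and "\<forall>(u, v) \<in> set (zip (x # xs) xs). r u v \<and> u \<in> H"
proof -
  let ?r_H = "\<lambda>u v. r u v \<and> u \<in> H"
  obtain z where "z \<notin> H" "?r_H\<^sup>*\<^sup>* x z"
    using rtranclp_exit[OF assms] .
  then obtain xs0 where "rtrancl_path ?r_H x xs0 z"
    by (auto simp: rtranclp_eq_rtrancl_path)
  then obtain xs where path: "rtrancl_path ?r_H x xs z" "distinct (x # xs)"
    by (blast elim: rtrancl_path_distinct)
  show ?thesis
  proof
    show "last (x # xs) \<notin> H"
      using rtrancl_path_last[OF path(1)] \<open>z \<notin> H\<close> by simp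
    show "\<forall>(u, v) \<in> set (zip (x # xs) xs). r u v \<and> u \<in> H"
      using rtrancl_path_zip[OF path(1)] by blast
  qed (rule path(2))
qed

lemma distinct_path_length_le_card:
  assumes "distinct (x # xs)" "\<forall>(u, v) \<in> set (zip (x # xs) xs). u \<in> H" "finite H"
  shows "length xs \<le> card H"
proof -
  have "take (length xs) (x # xs) = map fst (zip (x # xs) xs)"
    by (simp add: map_fst_zip_take)
  then have "set (take (length xs) (x # xs)) \<subseteq> H"
    using assms(2) by (auto simp: split_def)
  then have "card (set (take (length xs) (x # xs))) \<le> card H"
    by (rule card_mono[OF assms(3)])
  moreover have "distinct (take (length xs) (x # xs))"
    using assms(1) by (rule distinct_take)
  ultimately show ?thesis
    by (simp add: distinct_card)
qed

lemma sum_list_zip_telescope: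
  fixes f :: "'a \<Rightarrow> 'b :: ab_group_add"
  shows "f x - f (last (x # xs)) = (\<Sum>(u, v) \<leftarrow> zip (x # xs) xs. f u - f v)"
proof (induction xs arbitrary: x)
  case Nil
  then show ?case by simp
next
  case (Cons y xs)
  have "f x - f (last (x # y # xs)) = (f x - f y) + (f y - f (last (y # xs)))"
    by simp
  also have "\<dots> = (f x - f y) + (\<Sum>(u, v) \<leftarrow> zip (y # xs) xs. f u - f v)"
    by (simp only: Cons.IH)
  finally show ?case
    by simp
qed

lemma Esum_summable:
  fixes m :: "'a \<Rightarrow> real"
  assumes "symp adj" "\<forall>v. finite {u. adj v u}" "finite S" "\<forall>v. v \<notin> S \<longrightarrow> m v = 0"
  shows "(\<lambda>(u, v). (m u - m v)\<^sup>2) summable_on {(u, v). adj u v}"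
proof (rule finite_nonzero_values_imp_summable_on)
  let ?N = "SIGMA u:S. {v. adj u v}"
  let ?Z = "{x \<in> {(u, v). adj u v}. (case x of (u, v) \<Rightarrow> (m u - m v)\<^sup>2) \<noteq> 0}"
  have "?Z \<subseteq> ?N \<union> prod.swap ` ?N"
  proof
    fix e
    assume "e \<in> ?Z"
    then obtain u v where e: "e = (u, v)" "adj u v" "(m u - m v)\<^sup>2 \<noteq> 0"
      by auto
    then have "u \<in> S \<or> v \<in> S"
      using assms(4) by (cases "u \<in> S"; cases "v \<in> S") auto
    then show "e \<in> ?N \<union> prod.swap ` ?N"
      using assms(1) e by (auto simp: symp_def)
  qed
  moreover have "finite ?N"
    using assms(2,3) by auto
  ultimately show "finite ?Z"
    by (meson finite_UnI finite_imageI finite_subset)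
qed

lemma endpoint_gap_sq_le_Esum:
  fixes m :: "'a \<Rightarrow> real"
  assumes "symp adj" "(\<lambda>(u, v). (m u - m v)\<^sup>2) summable_on {(u, v). adj u v}"
    and "\<forall>(u, v) \<in> set (zip (x # xs) xs). adj u v" "distinct (x # xs)"
  shows "(m x - m (last (x # xs)))\<^sup>2 \<le> length xs * Esum adj m"
proof -
  define P where "P = set (zip (x # xs) xs)"
  define g where "g = (\<lambda>(u, v). (m u - m v)\<^sup>2)"
  have distinct_edges: "distinct (zip (x # xs) xs)"
    using assms(4) by (intro distinct_zipI1)
  then have card_P: "card P = length xs"
    by (simp add: P_def distinct_card)
  have telescope: "m x - m (last (x # xs)) = (\<Sum>(u, v) \<in> P. m u - m v)"
    unfolding P_def sum_list_distinct_conv_sum_set[OF distinct_edges, symmetric]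
    by (rule sum_list_zip_telescope)
  \<comment> \<open>P and its reversal are disjoint, which makes up for the factor 1/2 in Esum\<close>
  have "P \<inter> prod.swap ` P = {}"
    using zip_tl_not_reversed[OF assms(4)] by (auto simp: P_def)
  moreover have "sum g (prod.swap ` P) = sum g P"
    by (simp add: sum.reindex g_def case_prod_beta power2_commute)
  ultimately have "2 * sum g P = sum g (P \<union> prod.swap ` P)"
    by (simp add: P_def sum.union_disjoint)
  also have "\<dots> \<le> infsum g {(u, v). adj u v}"
    using assms(1,3)
    by (intro finite_sum_le_has_sum[OF has_sum_infsum[OF assms(2)[folded g_def]]])
      (auto simp: P_def g_def symp_def)
  finally have path_le_Esum: "sum g P \<le> Esum adj m"
    by (simp add: Esum_def g_def)
  have "(m x - m (last (x # xs)))\<^sup>2 \<le> sum g P * card P"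
    using sum_squared_le_sum_of_squares[of "\<lambda>(u, v). m u - m v" P]
    unfolding telescope g_def by (simp add: split_def)
  also have "\<dots> \<le> Esum adj m * card P"
    using path_le_Esum by (rule mult_right_mono) simp
  finally show ?thesis
    by (simp add: card_P mult.commute)
qed

lemma max_cube_le_Esum:
  fixes m :: "'a \<Rightarrow> real"
  assumes "symp adj" "connected_graph adj" "\<forall>v. finite {u. adj v u}" "prob_vector_on S m"
    and "\<forall>u. m u \<le> m p" "m w \<le> m p / 2"
  shows "(m p) ^ 3 / 8 \<le> Esum adj m"
proof -
  define M where "M = m p"
  define H where "H = {u. M / 2 < m u}"
  have "0 < M"
    using prob_vector_on_max_pos assms(4,5) by (auto simp: M_def)
  then have "p \<in> H" "w \<notin> H"
    using assms(6) by (auto simp: H_def M_def)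
  then have "finite H" and card_H: "real (card H) * (M / 2) < 1"
    using finite_superlevel[OF assms(4), of "M / 2"] card_superlevel_lt[OF assms(4), of "M / 2" p]
      \<open>0 < M\<close> by (simp_all add: H_def)
  have "adj\<^sup>*\<^sup>* p w"
    using assms(2) by (simp add: connected_graph_def)
  then obtain xs where path: "distinct (p # xs)" "last (p # xs) \<notin> H"
    and edges: "\<forall>(u, v) \<in> set (zip (p # xs) xs). adj u v \<and> u \<in> H"
    using \<open>w \<notin> H\<close> by (rule rtranclp_exit_path)
  define z where "z = last (p # xs)"
  have "length xs \<le> card H"
    using distinct_path_length_le_card path(1) edges \<open>finite H\<close> by fastforce
  then have "real (length xs) * (M / 2) \<le> real (card H) * (M / 2)"
    using \<open>0 < M\<close> by (intro mult_right_mono) auto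
  with card_H have "real (length xs) * (M / 2) < 1"
    by linarith
  then have length_bound: "length xs < 2 / M"
    using \<open>0 < M\<close> by (simp add: field_simps)
  have summable: "(\<lambda>(u, v). (m u - m v)\<^sup>2) summable_on {(u, v). adj u v}"
    using assms(4) by (intro Esum_summable assms(1,3)) (auto simp: prob_vector_on_def)
  have "(M / 2)\<^sup>2 \<le> (m p - m z)\<^sup>2"
    using path(2) \<open>0 < M\<close> by (intro power_mono) (auto simp: H_def M_def z_def)
  also have "\<dots> \<le> length xs * Esum adj m"
    unfolding z_def using edges path(1) by (intro endpoint_gap_sq_le_Esum assms(1) summable) auto
  also have "\<dots> \<le> 2 / M * Esum adj m"
    using length_bound by (intro mult_right_mono) (auto simp: Esum_def intro!: infsum_nonneg)
  finally have "M / 2 * (M / 2)\<^sup>2 \<le> M / 2 * (2 / M * Esum adj m)"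
    using \<open>0 < M\<close> by (intro mult_left_mono) auto
  moreover have "M / 2 * (2 / M * Esum adj m) = Esum adj m"
    using \<open>0 < M\<close> by simp
  moreover have "M / 2 * (M / 2)\<^sup>2 = M ^ 3 / 8"
    by (simp add: power2_eq_square power3_eq_cube)
  ultimately show ?thesis
    by (simp add: M_def)
qed

theorem lemma2p1:
  fixes adj :: "'a \<Rightarrow> 'a \<Rightarrow> bool" and r :: 'a and es :: "('a \<times> 'a) list"
  assumes "simple_graph adj"
    and "connected_graph adj"
    and "finite (UNIV :: 'a set) \<or> bounded_degree adj"
    and "\<forall>(u, v) \<in> set es. adj u v"
    and "finite (UNIV :: 'a set) \<longrightarrow> Qsum (frag_config r es) \<ge> 2 / real (card (UNIV :: 'a set))"
  shows "Esum adj (frag_config r es) \<ge> (Qsum (frag_config r es)) ^ 3 / 8"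
proof -
  define m where "m = frag_config r es"
  obtain S where S: "prob_vector_on S m"
    using prob_vector_frag_config[of r es] unfolding m_def by (elim exE)
  then obtain p where p: "\<forall>u. m u \<le> m p"
    by (rule prob_vector_on_has_max)
  obtain w where "m w \<le> m p / 2"
    using exists_vertex_below_half_max[OF S p] assms(5) m_def by blast
  have "symp adj"
    using assms(1) by (simp add: simple_graph_def symp_def)
  moreover have "\<forall>v. finite {u. adj v u}"
    using assms(3) by (auto simp: bounded_degree_def intro: finite_subset[OF subset_UNIV])
  ultimately have "(m p) ^ 3 / 8 \<le> Esum adj m"
    by (rule max_cube_le_Esum[OF _ assms(2) _ S p \<open>m w \<le> m p / 2\<close>])
  moreover have "Qsum m ^ 3 \<le> (m p) ^ 3"
    using Qsum_le_max[OF S p] by (intro power_mono) (auto simp: Qsum_def infsum_nonneg)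
  ultimately show ?thesis
    by (simp add: m_def)
qed

end
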